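(* If $c=c_1+\cdots+c_m$ is an $XY$-slope decomposition, then $c_1,\dots,c_m$ are linearly independent.
   Context: $V$ is a finite dimensional real vector space with a positive definite symmetric bilinear form $\langle\cdot,\cdot\rangle$; $\|\cdot\|_X$ is a norm with dual norm $\|v\|_Y=\max\{\langle v,w\rangle:\|w\|_X=1\}$. For nonzero $v$, $\mu_{XY}(v)=\|v\|_Y/\|v\|_X$. An expression $c=c_1+\cdots+c_m$ is an $XY$-slope decomposition if all $c_i$ are nonzero, $\langle c_i,c_j\rangle=\|c_i\|_X\|c_j\|_Y$ for all $i\le j$, and $\mu_{XY}(c_1)>\cdots>\mu_{XY}(c_m)$. *)

theory Defs
  imports "HOL-Analysis.Analysis"
begin

text \<open>V is modelled by a Euclidean space type; its inner product is the
positive definite symmetric bilinear form. nX is an arbitrary norm on V.\<close>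

definition is_norm :: "('a::real_vector \<Rightarrow> real) \<Rightarrow> bool" where
  "is_norm N \<longleftrightarrow>
     (\<forall>x. 0 \<le> N x) \<and> (\<forall>x. N x = 0 \<longleftrightarrow> x = 0) \<and>
     (\<forall>a x. N (a *\<^sub>R x) = \<bar>a\<bar> * N x) \<and>
     (\<forall>x y. N (x + y) \<le> N x + N y)"

text \<open>Dual norm: the maximum of inner v w over the X-unit sphere (the maximum
is attained, so the supremum equals it).\<close>
definition dual_norm :: "('a::real_inner \<Rightarrow> real) \<Rightarrow> 'a \<Rightarrow> real" where
  "dual_norm N v = (SUP w\<in>{w. N w = 1}. inner v w)"

definition slope :: "('a::real_inner \<Rightarrow> real) \<Rightarrow> 'a \<Rightarrow> real" where
  "slope N v = dual_norm N v / N v"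

definition slope_decomposition ::
  "('a::real_inner \<Rightarrow> real) \<Rightarrow> 'a \<Rightarrow> nat \<Rightarrow> (nat \<Rightarrow> 'a) \<Rightarrow> bool" where
  "slope_decomposition N c m cs \<longleftrightarrow>
     c = (\<Sum>i=1..m. cs i) \<and>
     (\<forall>i\<in>{1..m}. cs i \<noteq> 0) \<and>
     (\<forall>i\<in>{1..m}. \<forall>j\<in>{1..m}. i \<le> j \<longrightarrow> inner (cs i) (cs j) = N (cs i) * dual_norm N (cs j)) \<and>
     (\<forall>i\<in>{1..m}. \<forall>j\<in>{1..m}. i < j \<longrightarrow> slope N (cs i) > slope N (cs j))"

end

theory Submission
  imports Defs
begin

text \<open>Write \<open>X\<^sub>i\<close>, \<open>Y\<^sub>i\<close> for the two norms of \<open>c\<^sub>i\<close>. If \<open>v = \<Sum> a\<^sub>i c\<^sub>i = 0\<close>, pairing \<open>v\<close> with the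
last vector \<open>c\<^sub>n\<close> gives \<open>(\<Sum> a\<^sub>i X\<^sub>i) Y\<^sub>n = 0\<close>, and pairing with \<open>c\<^sub>n\<^sub>-\<^sub>1\<close> then leaves
\<open>a\<^sub>n (X\<^sub>n\<^sub>-\<^sub>1 Y\<^sub>n - X\<^sub>n Y\<^sub>n\<^sub>-\<^sub>1) = 0\<close>. The bracket is negative because the slopes strictly
decrease, so \<open>a\<^sub>n = 0\<close>, and induction on \<open>n\<close> finishes the argument.\<close>

definition slope_ordered ::
  "('a::real_inner \<Rightarrow> real) \<Rightarrow> ('a \<Rightarrow> real) \<Rightarrow> nat \<Rightarrow> (nat \<Rightarrow> 'a) \<Rightarrow> bool" where
  "slope_ordered X Y m cs \<longleftrightarrow>
     (\<forall>i\<in>{1..m}. cs i \<noteq> 0 \<and> 0 < X (cs i)) \<and>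
     (\<forall>i\<in>{1..m}. \<forall>j\<in>{1..m}. i \<le> j \<longrightarrow> inner (cs i) (cs j) = X (cs i) * Y (cs j)) \<and>
     (\<forall>i\<in>{1..m}. \<forall>j\<in>{1..m}. i < j \<longrightarrow> Y (cs j) / X (cs j) < Y (cs i) / X (cs i))"

lemma slope_ordered_Suc: "slope_ordered X Y (Suc m) cs \<Longrightarrow> slope_ordered X Y m cs"
  by (auto simp: slope_ordered_def)

lemma slope_ordered_pos:
  assumes "slope_ordered X Y m cs" and "i \<in> {1..m}"
  shows "0 < X (cs i)" and "0 < Y (cs i)"
proof -
  from assms have "cs i \<noteq> 0" and X_pos: "0 < X (cs i)"
    and "inner (cs i) (cs i) = X (cs i) * Y (cs i)"
    by (auto simp: slope_ordered_def)
  then have "0 < X (cs i) * Y (cs i)" by (metis inner_gt_zero_iff)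
  with X_pos show "0 < X (cs i)" and "0 < Y (cs i)"
    by (auto simp: zero_less_mult_iff)
qed

lemma slope_ordered_inner_sum:
  assumes "slope_ordered X Y m cs" and "j \<in> {1..m}" and "n \<le> j"
  shows "inner (\<Sum>i=1..n. a i *\<^sub>R cs i) (cs j) = (\<Sum>i=1..n. a i * X (cs i)) * Y (cs j)"
  unfolding inner_sum_left sum_distrib_right
  using assms by (intro sum.cong) (auto simp: slope_ordered_def)

lemma slope_ordered_last_coeff_zero:
  assumes ord: "slope_ordered X Y (Suc m) cs" and "1 \<le> m"
    and comb: "(\<Sum>i=1..Suc m. a i *\<^sub>R cs i) = 0"
  shows "a (Suc m) = 0"
proof -
  let ?n = "Suc m"
  define T where "T = (\<Sum>i=1..?n. a i * X (cs i))"
  have m: "m \<in> {1..?n}" and n: "?n \<in> {1..?n}" using \<open>1 \<le> m\<close> by auto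
  have "T * Y (cs ?n) = 0"
    using slope_ordered_inner_sum[OF ord n, of ?n a] comb by (simp add: T_def)
  then have T_zero: "T = 0"
    using slope_ordered_pos(2)[OF ord n] by simp
  have "inner (\<Sum>i=1..m. a i *\<^sub>R cs i) (cs m) = (T - a ?n * X (cs ?n)) * Y (cs m)"
    using slope_ordered_inner_sum[OF slope_ordered_Suc[OF ord], of m m a] \<open>1 \<le> m\<close>
    by (simp add: T_def)
  moreover have "inner (cs ?n) (cs m) = X (cs m) * Y (cs ?n)"
    using ord m n by (simp add: slope_ordered_def inner_commute)
  moreover have "inner (\<Sum>i=1..m. a i *\<^sub>R cs i) (cs m) + a ?n * inner (cs ?n) (cs m) = 0"
    using arg_cong[OF comb, of "\<lambda>v. inner v (cs m)"] by (simp add: inner_add_left)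
  ultimately have vanish: "a ?n * (X (cs m) * Y (cs ?n) - X (cs ?n) * Y (cs m)) = 0"
    using T_zero by (simp add: algebra_simps)
  have "Y (cs ?n) / X (cs ?n) < Y (cs m) / X (cs m)"
    using ord m n by (simp add: slope_ordered_def)
  then have "X (cs m) * Y (cs ?n) < X (cs ?n) * Y (cs m)"
    using slope_ordered_pos(1)[OF ord m] slope_ordered_pos(1)[OF ord n]
    by (simp add: divide_simps mult.commute)
  with vanish show ?thesis by simp
qed

lemma slope_ordered_combination_zero:
  assumes "slope_ordered X Y m cs" and "(\<Sum>i=1..m. a i *\<^sub>R cs i) = 0" and "i \<in> {1..m}"
  shows "a i = 0"
  using assms
proof (induction m arbitrary: i)
  case 0
  then show ?case by simp
next
  case (Suc m)
  show ?case
  proof (cases "m = 0")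
    case True
    with Suc.prems show ?thesis by (auto simp: slope_ordered_def)
  next
    case False
    have last: "a (Suc m) = 0"
      using slope_ordered_last_coeff_zero[OF Suc.prems(1)] Suc.prems(2) False by simp
    then have "(\<Sum>i=1..m. a i *\<^sub>R cs i) = 0" using Suc.prems(2) by simp
    with Suc.IH[OF slope_ordered_Suc[OF Suc.prems(1)]] last Suc.prems(3) show ?thesis
      by (auto simp: le_Suc_eq)
  qed
qed

lemma slope_ordered_inj_on:
  assumes "slope_ordered X Y m cs"
  shows "inj_on cs {1..m}"
proof (rule inj_onI)
  fix i j assume "i \<in> {1..m}" "j \<in> {1..m}" "cs i = cs j"
  with assms show "i = j"
    unfolding slope_ordered_def by (metis less_irrefl nat_neq_iff)
qed

lemma slope_ordered_independent:
  assumes ord: "slope_ordered X Y m cs"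
  shows "independent (cs ` {1..m})"
proof -
  have "u v = 0"
    if comb: "(\<Sum>v\<in>cs ` {1..m}. u v *\<^sub>R v) = 0" and v: "v \<in> cs ` {1..m}" for u v
  proof -
    from v obtain i where i: "i \<in> {1..m}" and "v = cs i" by blast
    have "(\<Sum>i=1..m. u (cs i) *\<^sub>R cs i) = 0"
      using comb sum.reindex[OF slope_ordered_inj_on[OF ord], of "\<lambda>v. u v *\<^sub>R v"] by simp
    with slope_ordered_combination_zero[OF ord _ i] \<open>v = cs i\<close> show ?thesis by simp
  qed
  then show ?thesis by (auto simp: dependent_finite)
qed

lemma slope_decomposition_slope_ordered:
  assumes "is_norm N" and "slope_decomposition N c m cs"
  shows "slope_ordered N (dual_norm N) m cs"
  using assms unfolding is_norm_def slope_decomposition_def slope_def slope_ordered_def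
  by (metis less_eq_real_def)

theorem mainTheorem13:
  fixes nX :: "'a::euclidean_space \<Rightarrow> real" and c :: 'a and m :: nat and cs :: "nat \<Rightarrow> 'a"
  assumes "is_norm nX"
    and "slope_decomposition nX c m cs"
  shows "inj_on cs {1..m} \<and> independent (cs ` {1..m})"
  using slope_ordered_inj_on slope_ordered_independent
    slope_decomposition_slope_ordered[OF assms] by blast

end
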